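(* Let $n\ge4$, let $d$ be a distance function on the edges of the complete graph $K_n$, and let $H$ be a Hamiltonian cycle of $K_n$. Then the probability that one application of the vertex-based random solution generation with the matrix $\Pi^H$ outputs a Hamiltonian cycle whose cost is at most the cost of $H$ is $\Omega(1)$.
   Context: The cost of a Hamiltonian cycle is the sum of $d$ over its edges. For a Hamiltonian cycle $H$, $\Pi^H=(\pi_{i,j})$ is the symmetric $n\times n$ matrix with $\pi_{i,i}=0$, $\pi_{i,j}=1-\frac1n$ if $\{i,j\}\in H$ and $\pi_{i,j}=\frac{1}{n(n-2)}$ otherwise. Vertex-based generation from $\Pi$: pick a start vertex uniformly at random; while unvisited vertices remain, from the current vertex $v$ move to an unvisited vertex $v'$ with probability $\pi_{v,v'}/\sum_{j\text{ unvisited}}\pi_{v,j}$; output the resulting Hamiltonian cycle. Asymptotics are as $n\to\infty$, uniformly in $H$ and $d$. *)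

theory Defs
  imports Complex_Main "HOL-Combinatorics.Multiset_Permutations"
begin

text \<open>Vertices of K_n are 0..<n; edges are two-element sets of vertices.
  A vertex ordering is a list xs with distinct entries and set xs = {0..<n}.\<close>

definition cycle_edges :: "nat list \<Rightarrow> nat set set" where
  "cycle_edges xs = {{xs ! i, xs ! ((i + 1) mod length xs)} | i. i < length xs}"

definition is_ham_cycle :: "nat \<Rightarrow> nat set set \<Rightarrow> bool" where
  "is_ham_cycle n H \<longleftrightarrow> (\<exists>xs \<in> permutations_of_set {0..<n}. H = cycle_edges xs)"

definition cost :: "(nat set \<Rightarrow> real) \<Rightarrow> nat set set \<Rightarrow> real" where
  "cost d H = (\<Sum>e\<in>H. d e)"

definition piH :: "nat \<Rightarrow> nat set set \<Rightarrow> nat \<Rightarrow> nat \<Rightarrow> real" where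
  "piH n H i j = (if i = j then 0
                  else if {i, j} \<in> H then 1 - 1 / real n
                  else 1 / (real n * (real n - 2)))"

text \<open>Probability that the vertex-based generation from the matrix P visits the
  vertices in the order xs: uniform start, then at step k move from xs!k to
  xs!(k+1) with probability P(xs!k, xs!(k+1)) / sum over unvisited j of P(xs!k, j).\<close>
definition seq_prob :: "nat \<Rightarrow> (nat \<Rightarrow> nat \<Rightarrow> real) \<Rightarrow> nat list \<Rightarrow> real" where
  "seq_prob n P xs = (1 / real n) *
     (\<Prod>k<n - 1. P (xs ! k) (xs ! (k + 1)) /
        (\<Sum>j\<in>{0..<n} - set (take (k + 1) xs). P (xs ! k) j))"

definition prob_cost_le :: "nat \<Rightarrow> (nat \<Rightarrow> nat \<Rightarrow> real) \<Rightarrow> (nat set \<Rightarrow> real) \<Rightarrow> real \<Rightarrow> real" where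
  "prob_cost_le n P d C =
     (\<Sum>xs \<in> {xs \<in> permutations_of_set {0..<n}. cost d (cycle_edges xs) \<le> C}. seq_prob n P xs)"

end

theory Submission
  imports Defs
begin

text \<open>If the generation starts at any vertex of \<open>H\<close> and then walks along \<open>H\<close> in a fixed
  direction, it outputs \<open>H\<close> itself; these are \<open>n\<close> distinct vertex orderings. Along such an
  ordering every step takes an edge of \<open>H\<close>, of weight \<open>1 - 1/n\<close>, and the row sum over the
  unvisited vertices consists of that weight, at most \<open>n - 2\<close> non-edges of total weight
  at most \<open>1/n\<close>, and, only at the first step, the other \<open>H\<close>-neighbour of the start. So
  each step has probability at least \<open>1 - 1/n\<close> (at least \<open>(1 - 1/n)/2\<close> at the first step),
  each ordering has probability at least \<open>(1 - 1/n)^(n-1) / (2n) \<ge> 1/(2en)\<close>, and the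
  probability of outputting \<open>H\<close>, whose cost is certainly at most that of \<open>H\<close>, is at least
  \<open>1/(2e)\<close>.\<close>

lemma range_shift_periodic:
  fixes f :: "nat \<Rightarrow> 'a"
  assumes periodic: "\<And>i. f (i + p) = f i" and "p > 0"
  shows "range (\<lambda>i. f (r + i)) = range f"
proof
  show "range (\<lambda>i. f (r + i)) \<subseteq> range f" by auto
  show "range f \<subseteq> range (\<lambda>i. f (r + i))"
  proof
    fix y assume "y \<in> range f"
    then obtain j where y: "y = f j" by auto
    have multiple: "f (j + p * m) = f j" for m
    proof (induction m)
      case (Suc m)
      have "f (j + p * Suc m) = f (j + p * m + p)" by (simp add: algebra_simps)
      then show ?case using periodic Suc by simp
    qed simp
    have "r \<le> j + p * r" using \<open>p > 0\<close> by (simp add: trans_le_add2)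
    then have "f (r + (j + p * r - r)) = y" by (simp add: y multiple)
    then show "y \<in> range (\<lambda>i. f (r + i))" by blast
  qed
qed

lemma cycle_edges_eq_range:
  assumes "xs \<noteq> []"
  shows "cycle_edges xs = range (\<lambda>i. {xs ! (i mod length xs), xs ! ((i + 1) mod length xs)})"
proof -
  have "(i mod length xs + 1) mod length xs = (i + 1) mod length xs" for i
    by (simp add: mod_Suc_eq)
  then show ?thesis
    using assms unfolding cycle_edges_def by (auto intro!: image_eqI exI[of _ "_ mod length xs"])
qed

lemma cycle_edges_rotate:
  assumes "xs \<noteq> []"
  shows "cycle_edges (rotate r xs) = cycle_edges xs"
proof -
  let ?L = "length xs"
  let ?f = "\<lambda>i. {xs ! (i mod ?L), xs ! ((i + 1) mod ?L)}"
  have "rotate r xs ! (i mod ?L) = xs ! ((r + i) mod ?L)" for i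
    using assms by (simp add: nth_rotate mod_add_right_eq)
  then have "cycle_edges (rotate r xs) = range (\<lambda>i. ?f (r + i))"
    using assms by (simp add: cycle_edges_eq_range add.assoc)
  also have "\<dots> = range ?f"
    using assms by (intro range_shift_periodic[where p = ?L]) (simp_all flip: add_Suc)
  finally show ?thesis using assms by (simp add: cycle_edges_eq_range)
qed

lemma cycle_edges_adjacent:
  assumes "distinct xs" "a < length xs" "b < length xs" "a \<noteq> b"
    and "{xs ! a, xs ! b} \<in> cycle_edges xs"
  shows "b = (a + 1) mod length xs \<or> a = (b + 1) mod length xs"
proof -
  obtain i where i: "i < length xs" "{xs ! a, xs ! b} = {xs ! i, xs ! ((i + 1) mod length xs)}"
    using assms(5) unfolding cycle_edges_def by auto
  have "(i + 1) mod length xs < length xs" using i(1) by (intro mod_less_divisor) auto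
  moreover have "xs ! a \<noteq> xs ! b" using assms nth_eq_iff_index_eq by blast
  ultimately show ?thesis
    using i assms(1-3) nth_eq_iff_index_eq by (metis doubleton_eq_iff)
qed

lemma distinct_nth_in_set_take_iff:
  assumes "distinct xs" "i < length xs"
  shows "xs ! i \<in> set (take m xs) \<longleftrightarrow> i < m"
proof
  assume "xs ! i \<in> set (take m xs)"
  then obtain j where "j < m" "j < length xs" "xs ! j = xs ! i"
    by (auto simp: in_set_conv_nth)
  then show "i < m" using assms nth_eq_iff_index_eq by metis
next
  assume "i < m"
  then show "xs ! i \<in> set (take m xs)"
    using assms by (auto simp: in_set_conv_nth intro!: exI[of _ i])
qed

lemma exp_neg1_le_power_one_minus_inverse:
  assumes "n \<ge> 2"
  shows "exp (-1) \<le> (1 - 1 / real n) ^ (n - 1)"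
proof -
  define m where "m = n - 1"
  have m_pos: "real m > 0" and n_eq: "real n = real m + 1"
    using assms unfolding m_def by auto
  have "(1 + 1 / real m) ^ m \<le> exp (1 / real m) ^ m"
    by (intro power_mono) (use exp_ge_add_one_self[of "1 / real m"] in \<open>auto simp: add.commute\<close>)
  also have "\<dots> = exp 1"
    using m_pos by (simp flip: exp_of_nat_mult)
  finally have "inverse (exp 1) \<le> inverse ((1 + 1 / real m) ^ m)"
    using m_pos by (intro le_imp_inverse_le zero_less_power) (auto intro: add_pos_pos)
  also have "\<dots> = inverse (1 + 1 / real m) ^ m"
    by (simp add: power_inverse)
  also have "inverse (1 + 1 / real m) = 1 - 1 / real n"
    using m_pos unfolding n_eq by (simp add: field_simps)
  finally show ?thesis
    unfolding m_def by (simp add: exp_minus)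
qed

lemma piH_nonneg:
  assumes "n \<ge> 4"
  shows "piH n H i j \<ge> 0"
proof -
  have "real n \<ge> 4" using assms by simp
  then have "1 / real n \<le> 1" "real n * (real n - 2) > 0" by auto
  then show ?thesis unfolding piH_def by auto
qed

lemma seq_prob_nonneg:
  assumes "\<And>i j. P i j \<ge> 0"
  shows "seq_prob n P xs \<ge> 0"
  unfolding seq_prob_def using assms
  by (intro mult_nonneg_nonneg prod_nonneg divide_nonneg_nonneg sum_nonneg) auto

context
  fixes n :: nat and xs :: "nat list"
  assumes n_ge_4: "n \<ge> 4" and xs_perm: "xs \<in> permutations_of_set {0..<n}"
begin

private lemma xs_distinct: "distinct xs" and xs_set: "set xs = {0..<n}"
  using xs_perm by (auto simp: permutations_of_set_def)

private lemma xs_length: "length xs = n"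
  using distinct_card[OF xs_distinct] xs_set by simp

private lemma next_vertex_unvisited:
  assumes "k < n - 1"
  shows "xs ! (k + 1) \<in> {0..<n} - set (take (k + 1) xs)"
proof -
  have "xs ! (k + 1) \<in> set xs" using assms xs_length by simp
  then show ?thesis
    using distinct_nth_in_set_take_iff[OF xs_distinct] assms xs_length xs_set by auto
qed

private lemma xs_nth_eq_iff: "i < n \<Longrightarrow> j < n \<Longrightarrow> xs ! i = xs ! j \<longleftrightarrow> i = j"
  using nth_eq_iff_index_eq[OF xs_distinct] xs_length by simp

lemma piH_cycle_order_step:
  assumes "k < n - 1"
  shows "piH n (cycle_edges xs) (xs ! k) (xs ! (k + 1)) = 1 - 1 / real n"
proof -
  have "{xs ! k, xs ! (k + 1)} \<in> cycle_edges xs"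
    unfolding cycle_edges_def xs_length using assms by (auto intro!: exI[of _ k])
  then show ?thesis unfolding piH_def using assms xs_nth_eq_iff[of k "k + 1"] by simp
qed

lemma cycle_edge_to_later_vertex:
  assumes "k + 1 < b" "b < n" and "{xs ! k, xs ! b} \<in> cycle_edges xs"
  shows "k = 0 \<and> b = n - 1"
proof -
  have "b = (k + 1) mod n \<or> k = (b + 1) mod n"
    using cycle_edges_adjacent[OF xs_distinct, of k b] assms xs_length by auto
  then have "k = (b + 1) mod n" using assms by simp
  then show ?thesis using assms by (cases "b + 1 = n") auto
qed

lemma unvisited_row_sum_le:
  assumes k: "k < n - 1"
  defines "U \<equiv> {0..<n} - set (take (k + 1) xs)"
  shows "(\<Sum>j\<in>U. piH n (cycle_edges xs) (xs ! k) j) \<le> (if k = 0 then 2 else 1)"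
proof -
  let ?P = "piH n (cycle_edges xs) (xs ! k)"
  let ?a = "1 - 1 / real n"
  let ?b = "1 / (real n * (real n - 2))"
  let ?R = "U - {xs ! (k + 1)}"
  have rn: "real n \<ge> 4" using n_ge_4 by simp
  define c where "c = (if k = 0 then ?a else 0)"
  have c_nonneg: "c \<ge> 0" using rn unfolding c_def by simp
  have R_bound: "?P j \<le> ?b + (if j = xs ! (n - 1) then c else 0)" if j: "j \<in> ?R" for j
  proof -
    have "j \<in> set xs" using j xs_set unfolding U_def by auto
    then obtain b where b: "b < n" "j = xs ! b"
      using xs_length by (auto simp: in_set_conv_nth)
    have "k + 1 < b"
      using j b distinct_nth_in_set_take_iff[OF xs_distinct, of b "k + 1"] xs_length
      unfolding U_def by (cases "b = k + 1") auto
    show ?thesis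
    proof (cases "{xs ! k, j} \<in> cycle_edges xs")
      case True
      then have "k = 0" "j = xs ! (n - 1)"
        using cycle_edge_to_later_vertex[of k b] \<open>k + 1 < b\<close> b by simp_all
      then show ?thesis using rn unfolding piH_def c_def by simp
    next
      case False
      then have "?P j \<le> ?b" using rn unfolding piH_def by simp
      then show ?thesis using c_nonneg by (simp add: add_increasing2)
    qed
  qed
  have "xs ! k \<in> set (take (k + 1) xs)"
    using distinct_nth_in_set_take_iff[OF xs_distinct, of k "k + 1"] k xs_length by simp
  then have "?R \<subseteq> {0..<n} - {xs ! k, xs ! (k + 1)}"
    unfolding U_def by auto
  then have "card ?R \<le> card ({0..<n} - {xs ! k, xs ! (k + 1)})"
    by (intro card_mono) auto
  also have "\<dots> = n - 2"
    using k xs_set xs_length xs_nth_eq_iff[of k "k + 1"] nth_mem[of k xs] nth_mem[of "k + 1" xs]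
    by (simp add: card_Diff_subset)
  finally have card_R: "card ?R \<le> n - 2" .
  have "(\<Sum>j\<in>?R. ?P j) \<le> (\<Sum>j\<in>?R. ?b + (if j = xs ! (n - 1) then c else 0))"
    using R_bound by (intro sum_mono) auto
  also have "\<dots> = real (card ?R) * ?b + (if xs ! (n - 1) \<in> ?R then c else 0)"
    unfolding U_def by (simp add: sum.distrib)
  also have "\<dots> \<le> real (n - 2) * ?b + c"
    using card_R rn c_nonneg by (intro add_mono mult_right_mono) auto
  also have "real (n - 2) * ?b = 1 / real n"
    using rn by (simp add: of_nat_diff field_simps)
  finally have "(\<Sum>j\<in>?R. ?P j) \<le> 1 / real n + c" .
  moreover have "(\<Sum>j\<in>U. ?P j) = ?a + (\<Sum>j\<in>?R. ?P j)"
    using sum.remove[OF _ next_vertex_unvisited[OF k], of ?P] piH_cycle_order_step[OF k]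
    unfolding U_def by simp
  moreover have "c \<le> (if k = 0 then 1 else 0)" unfolding c_def by simp
  ultimately show ?thesis by (cases "k = 0") simp_all
qed

lemma seq_prob_cycle_order_ge:
  "seq_prob n (piH n (cycle_edges xs)) xs \<ge> exp (-1) / (2 * real n)"
proof -
  let ?P = "piH n (cycle_edges xs)"
  let ?a = "1 - 1 / real n"
  define D where "D k = (\<Sum>j\<in>{0..<n} - set (take (k + 1) xs). ?P (xs ! k) j)" for k
  have rn: "real n \<ge> 4" using n_ge_4 by simp
  have step: "?a * (if k = 0 then 1 / 2 else 1) \<le> ?P (xs ! k) (xs ! (k + 1)) / D k"
    if k: "k < n - 1" for k
  proof -
    have "?P (xs ! k) (xs ! (k + 1)) \<le> D k"
      unfolding D_def using next_vertex_unvisited[OF k] piH_nonneg[OF n_ge_4]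
      by (intro member_le_sum) auto
    then have "?a \<le> D k" using piH_cycle_order_step[OF k] by simp
    moreover have "D k \<le> (if k = 0 then 2 else 1)"
      using unvisited_row_sum_le[OF k] unfolding D_def .
    ultimately have "?a / (if k = 0 then 2 else 1) \<le> ?a / D k"
      using rn by (intro divide_left_mono) (auto intro: order.strict_trans2[of 0 ?a])
    then show ?thesis using piH_cycle_order_step[OF k] by (cases "k = 0") auto
  qed
  have "exp (-1) / 2 \<le> ?a ^ (n - 1) / 2"
    using exp_neg1_le_power_one_minus_inverse n_ge_4 by simp
  also have "\<dots> = (\<Prod>k<n - 1. ?a * (if k = 0 then 1 / 2 else 1))"
    using n_ge_4 by (simp add: prod.distrib prod.If_cases)
  also have "\<dots> \<le> (\<Prod>k<n - 1. ?P (xs ! k) (xs ! (k + 1)) / D k)"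
    using step rn by (intro prod_mono) auto
  finally have "exp (-1) / 2 / real n \<le> (\<Prod>k<n - 1. ?P (xs ! k) (xs ! (k + 1)) / D k) / real n"
    using rn by (intro divide_right_mono) auto
  then show ?thesis unfolding seq_prob_def D_def by simp
qed

end

lemma rotate_in_permutations_of_set:
  assumes "xs \<in> permutations_of_set A"
  shows "rotate r xs \<in> permutations_of_set A"
  using assms by (simp add: permutations_of_set_def)

lemma inj_on_rotate:
  assumes "distinct xs"
  shows "inj_on (\<lambda>r. rotate r xs) {0..<length xs}"
proof
  fix r s assume r: "r \<in> {0..<length xs}" and s: "s \<in> {0..<length xs}"
    and "rotate r xs = rotate s xs"
  then have "rotate r xs ! 0 = rotate s xs ! 0" by simp
  moreover have "0 < length xs" using r by (cases xs) auto
  ultimately have "xs ! r = xs ! s" using r s by (simp add: nth_rotate)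
  then show "r = s" using nth_eq_iff_index_eq[OF assms] r s by auto
qed

theorem claim2:
  shows "\<exists>c > 0. \<exists>N. \<forall>n \<ge> N. \<forall>(d :: nat set \<Rightarrow> real) H.
           n \<ge> 4 \<longrightarrow> (\<forall>e. d e \<ge> 0) \<longrightarrow> is_ham_cycle n H \<longrightarrow>
           prob_cost_le n (piH n H) d (cost d H) \<ge> c"
proof (intro exI[of _ "exp (-1) / 2"] conjI exI[of _ 4] allI impI)
  fix n :: nat and d :: "nat set \<Rightarrow> real" and H
  assume n4: "n \<ge> 4" and "is_ham_cycle n H"
  then obtain ys where ys: "ys \<in> permutations_of_set {0..<n}" and H: "H = cycle_edges ys"
    unfolding is_ham_cycle_def by auto
  have dist: "distinct ys" and len: "length ys = n"
    using ys by (auto simp: permutations_of_set_def dest: distinct_card)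
  have "ys \<noteq> []" using len n4 by auto
  have rot: "rotate r ys \<in> permutations_of_set {0..<n}" "cycle_edges (rotate r ys) = H" for r
    using ys H \<open>ys \<noteq> []\<close> by (auto simp: rotate_in_permutations_of_set cycle_edges_rotate)
  have "exp (-1) / 2 = (\<Sum>r\<in>{0..<n}. exp (-1) / (2 * real n))"
    using n4 by simp
  also have "\<dots> \<le> (\<Sum>r\<in>{0..<n}. seq_prob n (piH n H) (rotate r ys))"
    using seq_prob_cycle_order_ge[OF n4 rot(1)] rot(2) by (intro sum_mono) metis
  also have "\<dots> = (\<Sum>xs\<in>(\<lambda>r. rotate r ys) ` {0..<n}. seq_prob n (piH n H) xs)"
    using inj_on_rotate[OF dist] len by (simp add: sum.reindex)
  also have "\<dots> \<le> prob_cost_le n (piH n H) d (cost d H)"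
    unfolding prob_cost_le_def using rot piH_nonneg[OF n4]
    by (intro sum_mono2 seq_prob_nonneg) (auto simp: finite_permutations_of_set)
  finally show "exp (-1) / 2 \<le> prob_cost_le n (piH n H) d (cost d H)" .
qed simp

end
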